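(* For every $\widehat r\in\mathbb{N}$ and every $m\ge1$, \[\mathrm{Var}(\mu^{(b^m\widehat r+1)})=\Big(1-\frac1{b^m}\Big)\mathrm{Var}(\mu^{(\widehat r)})+\frac1{b^m}\mathrm{Var}(\mu^{(\widehat r+1)})+b-\frac1{b^{m-1}}.\]
   Context: Fix an integer $b\ge2$. For $n\in\mathbb{N}$ with base-$b$ digits $n_k$, $s(n):=\sum_kn_k$. For $r,n\in\mathbb{N}$, $\Delta^{(r)}(n):=s(n+r)-s(n)$, and $\mu^{(r)}(d):=\lim_{N\to\infty}\frac1N|\{n<N:\Delta^{(r)}(n)=d\}|$ for $d\in\mathbb{Z}$; these limits exist and $\mu^{(r)}$ is a probability measure on $\mathbb{Z}$ with finite moments. $\mathrm{Var}(\mu^{(r)})$ is its variance. *)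

theory Defs
  imports "HOL-Analysis.Analysis"
begin

text \<open>Sum of base-b digits of n: the k-th digit is (n div b^k) mod b; for b \<ge> 2
  all digits with index k > n vanish, so summing over k \<le> n suffices.\<close>
definition digit_sum :: "nat \<Rightarrow> nat \<Rightarrow> nat" where
  "digit_sum b n = (\<Sum>k\<le>n. (n div b ^ k) mod b)"

definition Delta :: "nat \<Rightarrow> nat \<Rightarrow> nat \<Rightarrow> int" where
  "Delta b r n = int (digit_sum b (n + r)) - int (digit_sum b n)"

definition mu :: "nat \<Rightarrow> nat \<Rightarrow> int \<Rightarrow> real" where
  "mu b r d = lim (\<lambda>N. real (card {n. n < N \<and> Delta b r n = d}) / real N)"

definition Var_mu :: "nat \<Rightarrow> nat \<Rightarrow> real" where
  "Var_mu b r = (\<Sum>\<^sub>\<infinity>d\<in>(UNIV::int set). mu b r d * (real_of_int d)^2)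
              - (\<Sum>\<^sub>\<infinity>d\<in>(UNIV::int set). mu b r d * real_of_int d)^2"

end

theory Submission
  imports Defs
begin

text \<open>
  Write n = b q + t and b r + a with last digits t, a < b. Adding b r + a to n carries out of the
  last digit exactly when t + a \<ge> b, so Delta b (b r + a) (b q + t) is Delta b r q + a without
  a carry and Delta b (r + 1) q + a - b with one. Since the last digit of n is equidistributed,
  mu b (b r + a) is the mixture of mu b r shifted by a, with weight (b - a)/b, and of
  mu b (r + 1) shifted by a - b, with weight a/b. Along this recursion, starting from the point
  mass mu b 0 and the geometric law mu b 1, every mu b r exists and has mass 1, mean 0 and a finite
  second moment. The two shifts average to 0, so the variances satisfy
  Var(b r + a) = ((b - a)(Var r + a^2) + a (Var(r + 1) + (b - a)^2)) / b.
  For a = 0 this gives Var(b^k r) = Var r, and iterating the case a = 1 yields the theorem.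
\<close>

definition has_density :: "nat set \<Rightarrow> real \<Rightarrow> bool" where
  "has_density A \<delta> \<longleftrightarrow> (\<lambda>N. real (card {n. n < N \<and> n \<in> A}) / real N) \<longlonglongrightarrow> \<delta>"

lemma LIMSEQ_of_bound_over_n:
  fixes f :: "nat \<Rightarrow> real"
  assumes "\<And>N. N \<ge> 1 \<Longrightarrow> \<bar>f N - l\<bar> \<le> C / real N"
  shows "f \<longlonglongrightarrow> l"
proof -
  have "eventually (\<lambda>N. norm (f N - l) \<le> C / real N) sequentially"
    using assms unfolding eventually_sequentially by (auto intro!: exI[of _ 1])
  then have "(\<lambda>N. f N - l) \<longlonglongrightarrow> 0"
    by (rule Lim_null_comparison) (rule lim_const_over_n)
  then show ?thesis by (simp add: LIM_zero_cancel)
qed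

lemma has_density_empty: "has_density {} 0"
  unfolding has_density_def by simp

lemma has_density_UNIV: "has_density UNIV 1"
  unfolding has_density_def by (rule LIMSEQ_of_bound_over_n[where C=0]) simp

lemma has_density_UN:
  assumes "finite T" "disjoint_family_on A T" "\<And>t. t \<in> T \<Longrightarrow> has_density (A t) (\<delta> t)"
  shows "has_density (\<Union>t\<in>T. A t) (\<Sum>t\<in>T. \<delta> t)"
proof -
  have "card {n. n < N \<and> n \<in> (\<Union>t\<in>T. A t)} = (\<Sum>t\<in>T. card {n. n < N \<and> n \<in> A t})" for N
  proof -
    have "{n. n < N \<and> n \<in> (\<Union>t\<in>T. A t)} = (\<Union>t\<in>T. {n. n < N \<and> n \<in> A t})" by auto
    then show ?thesis
      using assms(1,2) by (simp add: card_UN_disjoint disjoint_family_on_def disjoint_iff)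
  qed
  then have "(\<lambda>N. real (card {n. n < N \<and> n \<in> (\<Union>t\<in>T. A t)}) / real N)
      = (\<lambda>N. \<Sum>t\<in>T. real (card {n. n < N \<and> n \<in> A t}) / real N)"
    by (simp add: sum_divide_distrib)
  then show ?thesis
    using assms(3) unfolding has_density_def by (simp add: tendsto_sum)
qed

lemma LIMSEQ_nat_div_over_n:
  assumes "c < k"
  shows "(\<lambda>N. real ((N + c) div k) / real N) \<longlonglongrightarrow> 1 / real k"
proof (rule LIMSEQ_of_bound_over_n[where C=1])
  fix N :: nat assume "N \<ge> 1"
  define M where "M = (N + c) div k"
  have "M * k \<le> N + c" "N + c < M * k + k"
    unfolding M_def using assms div_mult_mod_eq[of "N + c" k] mod_less_divisor[of k "N + c"]
    by linarith+
  then have "\<bar>real M * real k - real N\<bar> \<le> real k"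
    using assms unfolding abs_le_iff by (simp add: of_nat_mult[symmetric] del: of_nat_mult)
  have "\<bar>real M / real N - 1 / real k\<bar> = \<bar>real M * real k - real N\<bar> / (real k * real N)"
    using assms \<open>N \<ge> 1\<close> by (simp add: field_simps)
  also have "\<dots> \<le> real k / (real k * real N)"
    using \<open>\<bar>real M * real k - real N\<bar> \<le> real k\<close> by (intro divide_right_mono) auto
  also have "\<dots> = 1 / real N"
    using assms by simp
  finally show "\<bar>real M / real N - 1 / real k\<bar> \<le> 1 / real N" .
qed

lemma has_density_affine_image:
  assumes A: "has_density A \<delta>" and "t < k"
  shows "has_density ((\<lambda>q. k * q + t) ` A) (\<delta> / real k)"
proof -
  define M where "M N = (N + (k - 1 - t)) div k" for N
  define c where "c m = card {q. q < m \<and> q \<in> A}" for m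
  have "k * q + t < N \<longleftrightarrow> q < M N" for q N
    unfolding M_def using \<open>t < k\<close>
    by (simp add: Suc_le_eq[symmetric] less_eq_div_iff_mult_less_eq algebra_simps) linarith
  then have "{n. n < N \<and> n \<in> (\<lambda>q. k * q + t) ` A} = (\<lambda>q. k * q + t) ` {q. q < M N \<and> q \<in> A}"
    for N
    by auto
  then have count: "card {n. n < N \<and> n \<in> (\<lambda>q. k * q + t) ` A} = c (M N)" for N
    unfolding c_def using \<open>t < k\<close> by (simp add: card_image inj_on_def)
  have M: "filterlim M at_top sequentially"
    unfolding M_def using \<open>t < k\<close>
    by (intro filterlim_compose[OF filterlim_at_top_div_const_nat filterlim_add_const_nat_at_top]) simp
  have c: "(\<lambda>N. real (c (M N)) / real (M N)) \<longlonglongrightarrow> \<delta>"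
    using filterlim_compose[OF A[unfolded has_density_def, folded c_def] M] .
  have ratio: "real (c (M N)) / real (M N) * (real (M N) / real N) = real (c (M N)) / real N" for N
    by (cases "M N = 0") (simp_all add: c_def)
  have "(\<lambda>N. real (c (M N)) / real (M N) * (real (M N) / real N)) \<longlonglongrightarrow> \<delta> * (1 / real k)"
    using c \<open>t < k\<close> unfolding M_def by (intro tendsto_mult LIMSEQ_nat_div_over_n) auto
  then show ?thesis
    unfolding has_density_def count ratio by simp
qed

lemma less_power_self:
  fixes b n :: nat
  assumes "b \<ge> 2"
  shows "n < b ^ n"
  using less_exp[of n] power_mono[of 2 b n] assms by linarith

lemma mult_add_induct [consumes 1, case_names zero one mult mult_add]:
  fixes P :: "nat \<Rightarrow> bool"
  assumes "b \<ge> 2" and "P 0" and "P 1"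
    and "\<And>r. P r \<Longrightarrow> P (b * r)"
    and "\<And>r a. 0 < a \<Longrightarrow> a < b \<Longrightarrow> P r \<Longrightarrow> P (r + 1) \<Longrightarrow> P (b * r + a)"
  shows "P n"
proof (induction n rule: less_induct)
  case (less n)
  consider "n = 0" | "n = 1" | "n \<ge> 2"
    by linarith
  then show ?case
  proof cases
    case 3
    define q a where "q = n div b" and "a = n mod b"
    have n: "n = b * q + a" and "a < b" and "q < n"
      using assms(1) 3 by (simp_all add: q_def a_def)
    show ?thesis
    proof (cases "a = 0")
      case True
      then show ?thesis
        using assms(4)[OF less.IH[OF \<open>q < n\<close>]] n by simp
    next
      case False
      have "q + 1 < n"
      proof (cases "q = 0")
        case True
        then show ?thesis
          using n 3 by simp
      next
        case False
        then show ?thesis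
          using n \<open>a \<noteq> 0\<close> assms(1) mult_le_mono1[of 2 b q] by linarith
      qed
      then show ?thesis
        using assms(5)[OF _ \<open>a < b\<close> less.IH less.IH] False n \<open>q < n\<close> by simp
    qed
  qed (use assms in simp_all)
qed

lemma digit_sum_eq_sum_lessThan:
  assumes "b \<ge> 2" and "n < b ^ K"
  shows "digit_sum b n = (\<Sum>k<K. n div b ^ k mod b)"
proof -
  have vanish: "n div b ^ k mod b = 0" if "n < k \<or> K \<le> k" for k
  proof -
    have "n < b ^ k"
    proof (cases "K \<le> k")
      case True
      have "b ^ K \<le> b ^ k"
        using True \<open>b \<ge> 2\<close> by (simp add: power_increasing)
      then show ?thesis
        using \<open>n < b ^ K\<close> by simp
    next
      case False
      with that have "n < k" by simp
      then have "b ^ n < b ^ k"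
        using \<open>b \<ge> 2\<close> by (simp add: power_strict_increasing)
      then show ?thesis
        using less_power_self[OF \<open>b \<ge> 2\<close>, of n] by simp
    qed
    then show ?thesis by simp
  qed
  have "digit_sum b n = (\<Sum>k<n + 1 + K. n div b ^ k mod b)"
    unfolding digit_sum_def by (rule sum.mono_neutral_left) (use vanish in auto)
  also have "\<dots> = (\<Sum>k<K. n div b ^ k mod b)"
    by (rule sum.mono_neutral_right) (use vanish in auto)
  finally show ?thesis .
qed

lemma digit_sum_mult_add:
  assumes "b \<ge> 2" and "t < b"
  shows "digit_sum b (b * q + t) = digit_sum b q + t"
proof -
  have "q < b ^ q"
    using less_power_self[OF \<open>b \<ge> 2\<close>] .
  then have "b * (q + 1) \<le> b ^ Suc q"
    using mult_le_mono2[of "q + 1" "b ^ q" b] by simp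
  then have "b * q + t < b ^ Suc q"
    using \<open>t < b\<close> by simp
  then have "digit_sum b (b * q + t) = (\<Sum>k<Suc q. (b * q + t) div b ^ k mod b)"
    using \<open>b \<ge> 2\<close> by (rule digit_sum_eq_sum_lessThan[rotated])
  also have "\<dots> = t + (\<Sum>k<q. q div b ^ k mod b)"
    using \<open>t < b\<close> by (subst sum.lessThan_Suc_shift) (simp add: div_mult2_eq)
  also have "(\<Sum>k<q. q div b ^ k mod b) = digit_sum b q"
    using \<open>b \<ge> 2\<close> \<open>q < b ^ q\<close> by (rule digit_sum_eq_sum_lessThan[symmetric])
  finally show ?thesis by simp
qed

lemma Delta_mult_add:
  assumes "b \<ge> 2" and "t < b" and "a < b"
  shows "Delta b (b * r + a) (b * q + t) =
    (if t + a < b then Delta b r q + int a else Delta b (r + 1) q + int a - int b)"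
proof (cases "t + a < b")
  case True
  have sum: "b * q + t + (b * r + a) = b * (q + r) + (t + a)"
    by (simp add: algebra_simps)
  show ?thesis
    unfolding Delta_def sum using True assms by (simp add: digit_sum_mult_add)
next
  case False
  have sum: "b * q + t + (b * r + a) = b * (q + (r + 1)) + (t + a - b)"
    using False by (simp add: algebra_simps)
  have "t + a - b < b"
    using assms by simp
  then show ?thesis
    unfolding Delta_def sum
    using False assms digit_sum_mult_add[OF \<open>b \<ge> 2\<close> \<open>t + a - b < b\<close>, of "q + (r + 1)"]
    by (simp add: digit_sum_mult_add)
qed

lemma Delta_level_set_mult_add:
  assumes "b \<ge> 2" and "a < b"
  shows "{n. Delta b (b * r + a) n = d} = (\<Union>t<b. (\<lambda>q. b * q + t) `
     (if t + a < b then {q. Delta b r q = d - int a} else {q. Delta b (r + 1) q = d - int a + int b}))"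
    (is "?L = ?R")
proof
  show "?L \<subseteq> ?R"
  proof
    fix n assume "n \<in> ?L"
    define q t where "q = n div b" and "t = n mod b"
    have n: "n = b * q + t" and "t < b"
      using \<open>b \<ge> 2\<close> by (simp_all add: q_def t_def)
    then have "q \<in> (if t + a < b then {q. Delta b r q = d - int a}
        else {q. Delta b (r + 1) q = d - int a + int b})"
      using \<open>n \<in> ?L\<close> Delta_mult_add[OF \<open>b \<ge> 2\<close> \<open>t < b\<close> \<open>a < b\<close>, of r q] by auto
    then show "n \<in> ?R"
      using n \<open>t < b\<close> by blast
  qed
  show "?R \<subseteq> ?L"
  proof
    fix n assume "n \<in> ?R"
    then obtain t q where "t < b" and n: "n = b * q + t" and "q \<in> (if t + a < b
        then {q. Delta b r q = d - int a} else {q. Delta b (r + 1) q = d - int a + int b})"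
      by blast
    then show "n \<in> ?L"
      using Delta_mult_add[OF \<open>b \<ge> 2\<close> \<open>t < b\<close> \<open>a < b\<close>, of r q] by (auto split: if_splits)
  qed
qed

lemma sum_lessThan_if_add_less:
  fixes x y :: real
  assumes "a \<le> b"
  shows "(\<Sum>t<b. if t + a < b then x else y) = real (b - a) * x + real a * y"
proof -
  have "{..<b} = {..<b - a} \<union> {b - a..<b}" and "{..<b - a} \<inter> {b - a..<b} = {}"
    by auto
  then have "(\<Sum>t<b. if t + a < b then x else y)
      = (\<Sum>t<b - a. if t + a < b then x else y) + (\<Sum>t\<in>{b - a..<b}. if t + a < b then x else y)"
    by (simp add: sum.union_disjoint)
  also have "\<dots> = (\<Sum>t<b - a. x) + (\<Sum>t\<in>{b - a..<b}. y)"
    by (intro arg_cong2[where f = "(+)"] sum.cong) auto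
  finally show ?thesis
    using assms by simp
qed

lemma has_density_Delta_mult_add:
  assumes "b \<ge> 2" and "a < b"
    and X: "has_density {q. Delta b r q = d - int a} X"
    and Y: "a > 0 \<Longrightarrow> has_density {q. Delta b (r + 1) q = d - int a + int b} Y"
  shows "has_density {n. Delta b (b * r + a) n = d} ((real (b - a) * X + real a * Y) / real b)"
proof -
  define S where "S t = (if t + a < b then {q. Delta b r q = d - int a}
    else {q. Delta b (r + 1) q = d - int a + int b})" for t
  have "has_density (\<Union>t<b. (\<lambda>q. b * q + t) ` S t) (\<Sum>t<b. (if t + a < b then X else Y) / real b)"
  proof (rule has_density_UN)
    show "disjoint_family_on (\<lambda>t. (\<lambda>q. b * q + t) ` S t) {..<b}"
      unfolding disjoint_family_on_def
    proof (intro ballI impI)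
      fix s t assume "s \<in> {..<b}" "t \<in> {..<b}" "s \<noteq> t"
      then have "(b * q + s) mod b \<noteq> (b * q' + t) mod b" for q q'
        by simp
      then have "b * q + s \<noteq> b * q' + t" for q q'
        by metis
      then show "(\<lambda>q. b * q + s) ` S s \<inter> (\<lambda>q. b * q + t) ` S t = {}"
        by blast
    qed
    show "has_density ((\<lambda>q. b * q + t) ` S t) ((if t + a < b then X else Y) / real b)"
      if "t \<in> {..<b}" for t
    proof (cases "t + a < b")
      case True
      then show ?thesis
        using has_density_affine_image[OF X, of t b] that by (simp add: S_def)
    next
      case False
      with that have "a > 0"
        by simp
      then show ?thesis
        using has_density_affine_image[OF Y, of t b] that False by (simp add: S_def)
    qed
  qed simp
  also have "(\<Sum>t<b. (if t + a < b then X else Y) / real b) = (\<Sum>t<b. if t + a < b then X else Y) / real b"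
    by (simp add: sum_divide_distrib)
  also have "\<dots> = (real (b - a) * X + real a * Y) / real b"
    using sum_lessThan_if_add_less[of a b X Y] \<open>a < b\<close> by simp
  finally show ?thesis
    unfolding Delta_level_set_mult_add[OF assms(1,2)] S_def .
qed

lemma mu_eqI: "has_density {n. Delta b r n = d} \<delta> \<Longrightarrow> mu b r d = \<delta>"
  unfolding mu_def has_density_def mem_Collect_eq by (rule limI)

lemma has_density_Delta_zero: "has_density {n. Delta b 0 n = d} (if d = 0 then 1 else 0)"
  by (simp add: Delta_def has_density_UNIV has_density_empty)

lemma mu_zero: "mu b 0 d = (if d = 0 then 1 else 0)"
  by (rule mu_eqI[OF has_density_Delta_zero])

lemma Delta_one_le:
  assumes "b \<ge> 2"
  shows "Delta b 1 n \<le> 1"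
proof (induction n rule: less_induct)
  case (less n)
  have "n mod b < b" "1 < b"
    using assms by simp_all
  from Delta_mult_add[OF assms this, of 0 "n div b"]
  have step: "Delta b 1 n = (if n mod b + 1 < b then Delta b 0 (n div b) + 1
      else Delta b 1 (n div b) + 1 - int b)"
    by simp
  show ?case
  proof (cases "n mod b + 1 < b")
    case True
    then show ?thesis
      using step by (simp add: Delta_def)
  next
    case False
    then have "n \<noteq> 0"
      using assms by (cases "n = 0") auto
    then have "Delta b 1 (n div b) \<le> 1"
      using assms by (intro less.IH) simp
    then show ?thesis
      using step False assms by simp
  qed
qed

lemma Delta_one_level_set_empty:
  assumes "b \<ge> 2" and "d > 1"
  shows "{n. Delta b 1 n = d} = {}"
  using Delta_one_le[OF assms(1)] assms(2) by (auto simp: not_le[symmetric])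

text \<open>
  For r = 1 the recursion refers to r + 1 = 1 itself, at level d + b - 1; the induction therefore
  runs on 1 - d, the levels d > 1 being empty.
\<close>

lemma has_density_Delta_one:
  assumes "b \<ge> 2"
  shows "\<exists>\<delta>. has_density {n. Delta b 1 n = d} \<delta>"
proof (induction "nat (1 - d)" arbitrary: d rule: less_induct)
  case less
  have larger: "\<exists>\<delta>. has_density {n. Delta b 1 n = d'} \<delta>" if "d' > d" for d'
  proof (cases "d' > 1")
    case True
    then show ?thesis
      using Delta_one_level_set_empty[OF assms] has_density_empty by auto
  next
    case False
    then show ?thesis
      using less that by simp
  qed
  have "1 < b" "d - 1 + int b > d"
    using assms by simp_all
  then obtain Y where Y: "has_density {n. Delta b 1 n = d - 1 + int b} Y"
    using larger by blast
  have "has_density {n. Delta b (b * 0 + 1) n = d}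
      ((real (b - 1) * (if d - int 1 = 0 then 1 else 0) + real 1 * Y) / real b)"
    by (rule has_density_Delta_mult_add[OF assms \<open>1 < b\<close> has_density_Delta_zero]) (use Y in simp)
  then show ?case
    by auto
qed

lemma has_density_Delta:
  assumes "b \<ge> 2"
  shows "has_density {n. Delta b r n = d} (mu b r d)"
proof -
  have "\<forall>d. \<exists>\<delta>. has_density {n. Delta b r n = d} \<delta>"
    using assms
  proof (induction r rule: mult_add_induct)
    case zero
    then show ?case
      using has_density_Delta_zero by blast
  next
    case one
    then show ?case
      using has_density_Delta_one[OF assms] by blast
  next
    case (mult r)
    then show ?case
      using has_density_Delta_mult_add[OF assms, of 0 r] assms by fastforce
  next
    case (mult_add r a)
    then show ?case
      using has_density_Delta_mult_add[OF assms, of a r] by blast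
  qed
  then show ?thesis
    using mu_eqI by blast
qed

lemma mu_mult_add:
  assumes "b \<ge> 2" and "a < b"
  shows "mu b (b * r + a) d =
    (real (b - a) * mu b r (d - int a) + real a * mu b (r + 1) (d - (int a - int b))) / real b"
proof -
  have "d - (int a - int b) = d - int a + int b"
    by simp
  then show ?thesis
    by (simp only:) (intro mu_eqI has_density_Delta_mult_add assms has_density_Delta)
qed

lemma mu_mult:
  assumes "b \<ge> 2"
  shows "mu b (b * r) = mu b r"
  using mu_mult_add[OF assms, of 0 r] assms by (auto intro!: ext)

lemma mu_one_rec:
  assumes "b \<ge> 2"
  shows "mu b 1 d = (real (b - 1) * mu b 0 (d - 1) + 1 * mu b 1 (d - (1 - int b))) / real b"
  using mu_mult_add[OF assms, of 1 0 d] assms by (simp add: algebra_simps)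

lemma mu_one_eq_zero:
  assumes "b \<ge> 2" and "d > 1"
  shows "mu b 1 d = 0"
  using mu_eqI[OF has_density_empty[folded Delta_one_level_set_empty[OF assms]]] .

definition centered_distribution :: "(int \<Rightarrow> real) \<Rightarrow> bool" where
  "centered_distribution p \<longleftrightarrow> (p has_sum 1) UNIV \<and> ((\<lambda>d. p d * of_int d) has_sum 0) UNIV
     \<and> (\<lambda>d. p d * (of_int d)\<^sup>2) summable_on UNIV"

definition second_moment :: "(int \<Rightarrow> real) \<Rightarrow> real" where
  "second_moment p = (\<Sum>\<^sub>\<infinity>d. p d * (of_int d)\<^sup>2)"

lemma has_sum_shift_int:
  fixes g :: "int \<Rightarrow> real"
  shows "((\<lambda>d. g (d - c)) has_sum s) UNIV \<longleftrightarrow> (g has_sum s) UNIV"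
  by (rule has_sum_reindex_bij_witness[of _ "\<lambda>d. d + c" "\<lambda>d. d - c"]) auto

lemma has_sum_shifted_moments:
  fixes p :: "int \<Rightarrow> real" and c :: int
  assumes "(p has_sum t) UNIV" and "((\<lambda>d. p d * of_int d) has_sum m) UNIV"
    and "((\<lambda>d. p d * (of_int d)\<^sup>2) has_sum s) UNIV"
  shows "((\<lambda>d. p (d - c)) has_sum t) UNIV"
    and "((\<lambda>d. p (d - c) * of_int d) has_sum (m + of_int c * t)) UNIV"
    and "((\<lambda>d. p (d - c) * (of_int d)\<^sup>2) has_sum (s + 2 * of_int c * m + (of_int c)\<^sup>2 * t)) UNIV"
proof -
  show "((\<lambda>d. p (d - c)) has_sum t) UNIV"
    using assms(1) by (simp add: has_sum_shift_int[of p])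
  have "((\<lambda>e. p e * of_int e + of_int c * p e) has_sum (m + of_int c * t)) UNIV"
    by (intro has_sum_add has_sum_cmult_right assms)
  then have "((\<lambda>e. p e * of_int (e + c)) has_sum (m + of_int c * t)) UNIV"
    by (simp add: algebra_simps)
  then show "((\<lambda>d. p (d - c) * of_int d) has_sum (m + of_int c * t)) UNIV"
    using has_sum_shift_int[of "\<lambda>e. p e * of_int (e + c)" c] by simp
  have "((\<lambda>e. p e * (of_int e)\<^sup>2 + (2 * of_int c) * (p e * of_int e) + (of_int c)\<^sup>2 * p e)
      has_sum (s + 2 * of_int c * m + (of_int c)\<^sup>2 * t)) UNIV"
    by (intro has_sum_add has_sum_cmult_right assms)
  then have "((\<lambda>e. p e * (of_int (e + c))\<^sup>2) has_sum (s + 2 * of_int c * m + (of_int c)\<^sup>2 * t)) UNIV"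
    by (simp add: algebra_simps power2_eq_square)
  then show "((\<lambda>d. p (d - c) * (of_int d)\<^sup>2) has_sum (s + 2 * of_int c * m + (of_int c)\<^sup>2 * t)) UNIV"
    using has_sum_shift_int[of "\<lambda>e. p e * (of_int (e + c))\<^sup>2" c] by simp
qed

lemma has_sum_weighted_average:
  fixes f g h :: "int \<Rightarrow> real"
  assumes "(f has_sum x) A" and "(g has_sum y) A" and "\<And>d. h d = (u * f d + v * g d) / w"
  shows "(h has_sum (u * x + v * y) / w) A"
proof -
  have "((\<lambda>d. (u * f d + v * g d) / w) has_sum (u * x + v * y) / w) A"
    by (intro has_sum_cmult_right[where c = "1 / w", simplified] has_sum_add has_sum_cmult_right assms(1,2))
  moreover have "h = (\<lambda>d. (u * f d + v * g d) / w)"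
    using assms(3) by (rule ext)
  ultimately show ?thesis
    by simp
qed

lemma mixture_moments_has_sum:
  fixes p p0 p1 :: "int \<Rightarrow> real" and c0 c1 :: int
  assumes "(p0 has_sum t0) UNIV" and "((\<lambda>d. p0 d * of_int d) has_sum m0) UNIV"
    and "((\<lambda>d. p0 d * (of_int d)\<^sup>2) has_sum s0) UNIV"
    and "(p1 has_sum t1) UNIV" and "((\<lambda>d. p1 d * of_int d) has_sum m1) UNIV"
    and "((\<lambda>d. p1 d * (of_int d)\<^sup>2) has_sum s1) UNIV"
    and p: "\<And>d. p d = (u * p0 (d - c0) + v * p1 (d - c1)) / w"
  shows "(p has_sum (u * t0 + v * t1) / w) UNIV"
    and "((\<lambda>d. p d * of_int d) has_sum
      (u * (m0 + of_int c0 * t0) + v * (m1 + of_int c1 * t1)) / w) UNIV"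
    and "((\<lambda>d. p d * (of_int d)\<^sup>2) has_sum (u * (s0 + 2 * of_int c0 * m0 + (of_int c0)\<^sup>2 * t0)
      + v * (s1 + 2 * of_int c1 * m1 + (of_int c1)\<^sup>2 * t1)) / w) UNIV"
proof -
  note shift0 = has_sum_shifted_moments[OF assms(1-3), of c0]
  note shift1 = has_sum_shifted_moments[OF assms(4-6), of c1]
  show "(p has_sum (u * t0 + v * t1) / w) UNIV"
    by (rule has_sum_weighted_average[OF shift0(1) shift1(1) p])
  show "((\<lambda>d. p d * of_int d) has_sum
      (u * (m0 + of_int c0 * t0) + v * (m1 + of_int c1 * t1)) / w) UNIV"
    by (rule has_sum_weighted_average[OF shift0(2) shift1(2)]) (simp add: p field_simps)
  show "((\<lambda>d. p d * (of_int d)\<^sup>2) has_sum (u * (s0 + 2 * of_int c0 * m0 + (of_int c0)\<^sup>2 * t0)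
      + v * (s1 + 2 * of_int c1 * m1 + (of_int c1)\<^sup>2 * t1)) / w) UNIV"
    by (rule has_sum_weighted_average[OF shift0(3) shift1(3)]) (simp add: p field_simps)
qed

lemma centered_distribution_second_moment:
  "centered_distribution p \<Longrightarrow> ((\<lambda>d. p d * (of_int d)\<^sup>2) has_sum second_moment p) UNIV"
  unfolding centered_distribution_def second_moment_def by simp

lemma centered_mixture:
  fixes p p0 p1 :: "int \<Rightarrow> real" and c0 c1 :: int
  assumes p0: "centered_distribution p0" and p1: "centered_distribution p1"
    and "u + v = w" and "w \<noteq> 0" and "u * of_int c0 + v * of_int c1 = 0"
    and "\<And>d. p d = (u * p0 (d - c0) + v * p1 (d - c1)) / w"
  shows "centered_distribution p"
    and "second_moment p =
      (u * (second_moment p0 + (of_int c0)\<^sup>2) + v * (second_moment p1 + (of_int c1)\<^sup>2)) / w"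
proof -
  note moments = mixture_moments_has_sum[OF _ _ centered_distribution_second_moment[OF p0]
      _ _ centered_distribution_second_moment[OF p1] assms(6)]
  note has_sums = moments[OF p0[unfolded centered_distribution_def, THEN conjunct1]
      p0[unfolded centered_distribution_def, THEN conjunct2, THEN conjunct1]
      p1[unfolded centered_distribution_def, THEN conjunct1]
      p1[unfolded centered_distribution_def, THEN conjunct2, THEN conjunct1]]
  show "centered_distribution p"
    using has_sums assms(3-5) unfolding centered_distribution_def summable_on_def by auto
  show "second_moment p =
      (u * (second_moment p0 + (of_int c0)\<^sup>2) + v * (second_moment p1 + (of_int c1)\<^sup>2)) / w"
    using infsumI[OF has_sums(3)] unfolding second_moment_def by simp
qed

lemma has_sum_supported_at:
  fixes f :: "int \<Rightarrow> real"
  assumes "\<And>d. d \<noteq> x \<Longrightarrow> f d = 0"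
  shows "(f has_sum f x) UNIV"
proof -
  have "(f has_sum f x) {x}"
    by (rule has_sum_finiteI) auto
  moreover have "(f has_sum f x) {x} \<longleftrightarrow> (f has_sum f x) UNIV"
    by (rule has_sum_cong_neutral) (use assms in auto)
  ultimately show ?thesis
    by simp
qed

lemma centered_mu_zero: "centered_distribution (mu b 0)"
proof -
  have "(mu b 0 has_sum 1) UNIV"
    using has_sum_supported_at[of 0 "mu b 0"] by (simp add: mu_zero)
  moreover have "((\<lambda>d. mu b 0 d * of_int d) has_sum 0) UNIV"
    using has_sum_supported_at[of 0 "\<lambda>d. mu b 0 d * of_int d"] by (simp add: mu_zero)
  moreover have "((\<lambda>d. mu b 0 d * (of_int d)\<^sup>2) has_sum 0) UNIV"
    using has_sum_supported_at[of 0 "\<lambda>d. mu b 0 d * (of_int d)\<^sup>2"] by (simp add: mu_zero)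
  ultimately show ?thesis
    unfolding centered_distribution_def summable_on_def by blast
qed

lemma mu_one_geometric:
  assumes "b \<ge> 2"
  shows "mu b 1 (1 - (int b - 1) * int j) = (real b - 1) / real b ^ (j + 1)"
proof (induction j)
  case 0
  then show ?case
    using mu_one_rec[OF assms, of 1] mu_one_eq_zero[OF assms, of "int b"] assms
    by (simp add: mu_zero of_nat_diff)
next
  case (Suc j)
  have "1 - (int b - 1) * int (Suc j) \<noteq> 1"
    using assms by simp
  moreover have "1 - (int b - 1) * int (Suc j) - (1 - int b) = 1 - (int b - 1) * int j"
    by (simp add: algebra_simps)
  ultimately show ?case
    using mu_one_rec[OF assms, of "1 - (int b - 1) * int (Suc j)"] Suc by (simp add: mu_zero)
qed

lemma mu_one_off_support:
  assumes "b \<ge> 2" and "d \<notin> range (\<lambda>j. 1 - (int b - 1) * int j)"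
  shows "mu b 1 d = 0"
  using assms(2)
proof (induction "nat (1 - d)" arbitrary: d rule: less_induct)
  case less
  show ?case
  proof (cases "d > 1")
    case True
    then show ?thesis
      using mu_one_eq_zero[OF assms(1)] by simp
  next
    case False
    have "d \<noteq> 1"
      using less.prems by (metis (no_types, lifting) mult_zero_right of_nat_0 diff_zero rangeI)
    have off: "d - (1 - int b) \<notin> range (\<lambda>j. 1 - (int b - 1) * int j)"
    proof
      assume "d - (1 - int b) \<in> range (\<lambda>j. 1 - (int b - 1) * int j)"
      then obtain j where "d - (1 - int b) = 1 - (int b - 1) * int j"
        by blast
      then have "d = 1 - (int b - 1) * int (Suc j)"
        by (simp add: algebra_simps)
      then show False
        using less.prems by blast
    qed
    have "mu b 1 (d - (1 - int b)) = 0"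
    proof (cases "d - (1 - int b) > 1")
      case True
      then show ?thesis
        using mu_one_eq_zero[OF assms(1)] by simp
    next
      case False
      then have "nat (1 - (d - (1 - int b))) < nat (1 - d)"
        using assms(1) \<open>\<not> d > 1\<close> by simp
      then show ?thesis
        using less.hyps off by blast
    qed
    then show ?thesis
      using mu_one_rec[OF assms(1), of d] \<open>d \<noteq> 1\<close> by (simp add: mu_zero)
  qed
qed

lemma mu_one_nonneg:
  assumes "b \<ge> 2"
  shows "mu b 1 d \<ge> 0"
proof (cases "d \<in> range (\<lambda>j. 1 - (int b - 1) * int j)")
  case True
  then obtain j where "d = 1 - (int b - 1) * int j"
    by blast
  then show ?thesis
    using mu_one_geometric[OF assms, of j] assms by simp
next
  case False
  then show ?thesis
    using mu_one_off_support[OF assms] by simp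
qed

lemma summable_square_times_half_power: "summable (\<lambda>j::nat. (real j + 1)\<^sup>2 * (1 / 2) ^ j)"
proof (rule summable_ratio_test[where c = "8 / 9" and N = 2])
  fix n :: nat
  assume "n \<ge> 2"
  then have "3 * (real n + 2) \<le> 4 * (real n + 1)"
    by simp
  then have "(3 * (real n + 2))\<^sup>2 \<le> (4 * (real n + 1))\<^sup>2"
    by (rule power_mono) simp
  then have "(real n + 2)\<^sup>2 * (1 / 2) \<le> 8 / 9 * (real n + 1)\<^sup>2"
    unfolding power_mult_distrib by simp
  then have "(real n + 2)\<^sup>2 * (1 / 2) * (1 / 2) ^ n \<le> 8 / 9 * (real n + 1)\<^sup>2 * (1 / 2) ^ n"
    by (rule mult_right_mono) simp
  then show "norm ((real (Suc n) + 1)\<^sup>2 * (1 / 2) ^ Suc n)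
      \<le> 8 / 9 * norm ((real n + 1)\<^sup>2 * (1 / 2 :: real) ^ n)"
    by (simp add: add.commute mult.assoc mult.left_commute)
qed simp

lemma one_plus_square_le:
  fixes c j :: real
  assumes "c \<ge> 1" and "j \<ge> 0"
  shows "1 + (1 - c * j)\<^sup>2 \<le> 3 * c\<^sup>2 * (j + 1)\<^sup>2"
proof -
  have "0 \<le> (1 + c * j)\<^sup>2" "1 \<le> c\<^sup>2" "0 \<le> c\<^sup>2 * j" "0 \<le> c\<^sup>2 * j\<^sup>2"
    using assms by (simp_all add: one_le_power)
  then show ?thesis
    by (simp add: power2_eq_square algebra_simps)
qed

lemma summable_on_mu_one_weighted:
  assumes "b \<ge> 2"
  shows "(\<lambda>d. mu b 1 d * (1 + (of_int d)\<^sup>2)) summable_on UNIV"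
proof -
  define c where "c = real b - 1"
  define \<phi> where "\<phi> j = 1 - (int b - 1) * int j" for j
  define w where "w d = mu b 1 d * (1 + (of_int d)\<^sup>2)" for d
  have "c \<ge> 1"
    using assms by (simp add: c_def)
  have w\<phi>: "w (\<phi> j) = c / real b ^ (j + 1) * (1 + (1 - c * real j)\<^sup>2)" for j
    using mu_one_geometric[OF assms, of j] assms by (simp add: w_def \<phi>_def c_def)
  have "c / real b ^ (j + 1) \<le> (1 / 2) ^ j" for j
  proof -
    have "c / real b ^ (j + 1) \<le> real b / real b ^ (j + 1)"
      using assms by (intro divide_right_mono) (simp_all add: c_def)
    also have "\<dots> = 1 / real b ^ j"
      using assms by simp
    also have "\<dots> \<le> 1 / 2 ^ j"
      using assms by (intro divide_left_mono power_mono) auto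
    finally show ?thesis
      by (simp add: power_one_over)
  qed
  then have "w (\<phi> j) \<le> (1 / 2) ^ j * (3 * c\<^sup>2 * (real j + 1)\<^sup>2)" for j
    unfolding w\<phi> using one_plus_square_le[OF \<open>c \<ge> 1\<close>, of "real j"]
    by (intro mult_mono) simp_all
  moreover have nonneg: "0 \<le> w (\<phi> j)" for j
    unfolding w\<phi> using \<open>c \<ge> 1\<close> by simp
  ultimately have "summable (\<lambda>j. w (\<phi> j))"
    by (intro summable_comparison_test'[OF summable_mult[OF summable_square_times_half_power, of "3 * c\<^sup>2"]])
      (simp add: algebra_simps)
  then have "(\<lambda>j. w (\<phi> j)) summable_on UNIV"
    using nonneg by (simp add: summable_on_UNIV_nonneg_real_iff)
  moreover have "inj \<phi>"
    using assms by (simp add: inj_def \<phi>_def)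
  ultimately have "w summable_on range \<phi>"
    by (simp add: summable_on_reindex o_def)
  moreover have "w summable_on range \<phi> \<longleftrightarrow> w summable_on UNIV"
    by (rule summable_on_cong_neutral) (use mu_one_off_support[OF assms] in \<open>auto simp: w_def \<phi>_def\<close>)
  ultimately show ?thesis
    unfolding w_def by simp
qed

text \<open>
  mu b 1 occurs on both sides of its recursion, so once its moments are known to exist, its mass t
  and mean m are pinned down by the fixed-point equations t = (b - 1 + t)/b and m = m/b.
\<close>

lemma centered_mu_one:
  assumes "b \<ge> 2"
  shows "centered_distribution (mu b 1)"
proof -
  have dominated: "(\<lambda>d. mu b 1 d * g d) summable_on UNIV"
    if "\<And>d. \<bar>g d\<bar> \<le> 1 + (of_int d)\<^sup>2" for g
    by (rule abs_summable_summable,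
        rule Infinite_Sum.abs_summable_on_comparison_test'[OF summable_on_mu_one_weighted[OF assms]])
      (use that mu_one_nonneg[OF assms] in \<open>simp add: abs_mult mult_left_mono\<close>)
  have "\<bar>x\<bar> \<le> 1 + x\<^sup>2" for x :: real
  proof -
    have "0 \<le> (\<bar>x\<bar> - 1)\<^sup>2" "0 \<le> x\<^sup>2"
      by simp_all
    then show ?thesis
      unfolding power2_diff by simp
  qed
  then obtain t m s where t: "(mu b 1 has_sum t) UNIV" and m: "((\<lambda>d. mu b 1 d * of_int d) has_sum m) UNIV"
    and s: "((\<lambda>d. mu b 1 d * (of_int d)\<^sup>2) has_sum s) UNIV"
    using dominated[of "\<lambda>_. 1"] dominated[of "\<lambda>d. of_int d"] dominated[of "\<lambda>d. (of_int d)\<^sup>2"]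
    unfolding summable_on_def by fastforce
  note moments = mixture_moments_has_sum[OF _ _ centered_distribution_second_moment[OF centered_mu_zero]
      t m s mu_one_rec[OF assms]]
  have "t = (real (b - 1) * 1 + 1 * t) / real b"
    using moments(1) t centered_mu_zero unfolding centered_distribution_def by (blast dest: has_sum_unique)
  then have "(t - 1) * (real b - 1) = 0"
    using assms by (simp add: field_simps of_nat_diff)
  then have "t = 1"
    using assms by simp
  have "m = (real (b - 1) * (0 + of_int 1 * 1) + 1 * (m + of_int (1 - int b) * t)) / real b"
    using moments(2) m centered_mu_zero unfolding centered_distribution_def by (blast dest: has_sum_unique)
  then have "m * (real b - 1) = 0"
    using assms \<open>t = 1\<close> by (simp add: field_simps of_nat_diff)
  then have "m = 0"
    using assms by simp
  show ?thesis
    unfolding centered_distribution_def summable_on_def using t m s \<open>t = 1\<close> \<open>m = 0\<close> by blast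
qed

lemma centered_mu_mult_add:
  assumes "b \<ge> 2" and "a < b"
    and "centered_distribution (mu b r)" and "centered_distribution (mu b (r + 1))"
  shows "centered_distribution (mu b (b * r + a))"
    and "second_moment (mu b (b * r + a)) = (real (b - a) * (second_moment (mu b r) + (real a)\<^sup>2)
      + real a * (second_moment (mu b (r + 1)) + (real b - real a)\<^sup>2)) / real b"
proof -
  have "real (b - a) + real a = real b" "real b \<noteq> 0"
    "real (b - a) * of_int (int a) + real a * of_int (int a - int b) = 0"
    using assms by (simp_all add: of_nat_diff algebra_simps)
  note mixture = centered_mixture[OF assms(3,4) this mu_mult_add[OF assms(1,2)]]
  show "centered_distribution (mu b (b * r + a))"
    by (rule mixture(1))
  show "second_moment (mu b (b * r + a)) = (real (b - a) * (second_moment (mu b r) + (real a)\<^sup>2)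
      + real a * (second_moment (mu b (r + 1)) + (real b - real a)\<^sup>2)) / real b"
    using mixture(2) by (simp add: power2_commute)
qed

lemma centered_mu:
  assumes "b \<ge> 2"
  shows "centered_distribution (mu b r)"
  using assms
proof (induction r rule: mult_add_induct)
  case zero
  then show ?case
    by (rule centered_mu_zero)
next
  case one
  then show ?case
    by (rule centered_mu_one[OF assms])
next
  case (mult r)
  then show ?case
    by (simp add: mu_mult[OF assms])
next
  case (mult_add r a)
  then show ?case
    by (intro centered_mu_mult_add(1)[OF assms]) simp_all
qed

lemma Var_mu_eq_second_moment:
  assumes "b \<ge> 2"
  shows "Var_mu b r = second_moment (mu b r)"
  using centered_mu[OF assms, of r]
  unfolding Var_mu_def second_moment_def centered_distribution_def by (simp add: infsumI)

lemma Var_mu_mult_add: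
  assumes "b \<ge> 2" and "a < b"
  shows "Var_mu b (b * r + a) = (real (b - a) * (Var_mu b r + (real a)\<^sup>2)
      + real a * (Var_mu b (r + 1) + (real b - real a)\<^sup>2)) / real b"
  unfolding Var_mu_eq_second_moment[OF assms(1)]
  by (rule centered_mu_mult_add(2)[OF assms centered_mu centered_mu]) (use assms in simp_all)

lemma Var_mu_mult_add_one:
  assumes "b \<ge> 2"
  shows "Var_mu b (b * r + 1) =
    ((real b - 1) * (Var_mu b r + 1) + Var_mu b (r + 1) + (real b - 1)\<^sup>2) / real b"
  using Var_mu_mult_add[OF assms, of 1 r] assms by (simp add: of_nat_diff)

lemma Var_mu_pow_mult:
  assumes "b \<ge> 2"
  shows "Var_mu b (b ^ k * r) = Var_mu b r"
  by (induction k) (simp_all add: mult.assoc mu_mult[OF assms] Var_mu_def)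

theorem mainTheorem13:
  fixes b r m :: nat
  assumes "b \<ge> 2" and "m \<ge> 1"
  shows "Var_mu b (b ^ m * r + 1)
    = (1 - 1 / real b ^ m) * Var_mu b r + (1 / real b ^ m) * Var_mu b (r + 1)
      + real b - 1 / real b ^ (m - 1)"
  using assms(2)
proof (induction m rule: nat_induct_at_least)
  case base
  show ?case
    using Var_mu_mult_add_one[OF assms(1), of r] assms(1) by (simp add: field_simps power2_eq_square)
next
  case (Suc m)
  then obtain k where m: "m = Suc k"
    by (cases m) auto
  have "Var_mu b (b ^ Suc m * r + 1) =
      ((real b - 1) * (Var_mu b r + 1) + Var_mu b (b ^ m * r + 1) + (real b - 1)\<^sup>2) / real b"
    using Var_mu_mult_add_one[OF assms(1), of "b ^ m * r"] Var_mu_pow_mult[OF assms(1)]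
    by (simp add: mult.assoc)
  also have "\<dots> = ((real b - 1) * (Var_mu b r + 1) + ((1 - 1 / real b ^ Suc k) * Var_mu b r
      + (1 / real b ^ Suc k) * Var_mu b (r + 1) + real b - 1 / real b ^ k) + (real b - 1)\<^sup>2) / real b"
    using Suc.IH m by simp
  also have "\<dots> = (1 - 1 / real b ^ Suc m) * Var_mu b r + (1 / real b ^ Suc m) * Var_mu b (r + 1)
      + real b - 1 / real b ^ (Suc m - 1)"
    unfolding m using assms(1) by (simp add: field_simps power2_eq_square)
  finally show ?case .
qed

end
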